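(* Let $\mathfrak{G}$ be a non-redundant assembly graph. Then for every circuit $C$ of $\mathfrak{G}$ and every vertex $v$ of $\mathfrak{G}$, the number of occurrences of $v$ in $C$ equals the number of occurrences of $Label(v)$ in the cyclic string $Label(C)$.
   Context: All strings are over a fixed finite alphabet $\Sigma$. A cyclic string is a bi-infinite periodic word $\mathbb{Z}\to\Sigma$, considered up to shifting indices; its period is its least period $d\ge 1$. For a nonempty finite string $x$, $\langle x\rangle$ denotes the cyclic string obtained by repeating $x$ infinitely in both directions. A finite string $t$ is a substring of a cyclic string $c$ of period $d$ if it appears as a contiguous block of $c$; its number of occurrences in $c$ is the number of starting positions modulo $d$ at which it appears. A string $u$ is a proper infix of $w$ if $w=aub$ with $a,b$ nonempty. An abstract assembly graph is a finite directed multigraph in which each vertex and edge carries a label (a finite or cyclic string) such that for every edge $e$ from $u$ to $v$, $Label(u)$ is a prefix and $Label(v)$ is a suffix of $Label(e)$. An edge $e$ from $u$ to $v$ is a prefix edge if $Label(e)=Label(v)$ and a suffix edge if $Label(e)=Label(u)$. An assembly graph is an abstract assembly graph in which every vertex and edge lies on a directed cycle and no edge is both a prefix and a suffix edge. The label of a walk $v_0,e_1,v_1,\dots,e_n,v_n$ is $Label(e_1)$ followed, for $i=2,\dots,n$, by $Label(e_i)$ with its first $|Label(v_{i-1})|$ characters removed (consecutive edge labels overlap in the intermediate vertex label); a walk with no edges has the label of its vertex. A circuit is a closed walk ($v_n=v_0$), considered up to rotation and required to be primitive (not a repetition of a shorter closed walk); writing the walk label as $Label(v_0)\,x$, the label of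 the circuit is the cyclic string $\langle x\rangle$. The number of occurrences of a vertex $v$ in a circuit is the number of indices $i\in\{1,\dots,n\}$ with $v_i=v$. A walk $P$ is an inner subwalk of a walk $Q$ if $Q=APB$ for walks $A,B$ each containing at least one edge. An assembly graph is non-redundant if whenever $P,Q$ are walks with $Label(P)$ a proper infix of $Label(Q)$, $P$ occurs as an inner subwalk of $Q$. *)

theory Defs
  imports "HOL-Library.Sublist"
begin

record ('v, 'e, 'a) agraph =
  verts :: "'v set"
  arcs  :: "'e set"
  src   :: "'e \<Rightarrow> 'v"
  tgt   :: "'e \<Rightarrow> 'v"
  vlab  :: "'v \<Rightarrow> 'a list"
  elab  :: "'e \<Rightarrow> 'a list"

definition abstract_assembly_graph :: "('v, 'e, 'a::finite) agraph \<Rightarrow> bool" where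
  "abstract_assembly_graph G \<longleftrightarrow>
     finite (verts G) \<and> finite (arcs G) \<and>
     (\<forall>e\<in>arcs G. src G e \<in> verts G \<and> tgt G e \<in> verts G \<and>
        prefix (vlab G (src G e)) (elab G e) \<and> suffix (vlab G (tgt G e)) (elab G e))"

text \<open>A walk v0, e1, v1, ..., en, vn is represented by its start vertex v0 and
  its edge list [e1, ..., en]; the vertex v_i (i \<ge> 1) is the target of e_i.\<close>

definition is_walk :: "('v, 'e, 'a) agraph \<Rightarrow> 'v \<Rightarrow> 'e list \<Rightarrow> bool" where
  "is_walk G v0 es \<longleftrightarrow>
     v0 \<in> verts G \<and> set es \<subseteq> arcs G \<and>
     (es \<noteq> [] \<longrightarrow> src G (hd es) = v0) \<and>
     (\<forall>i. Suc i < length es \<longrightarrow> tgt G (es ! i) = src G (es ! Suc i))"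

definition walk_end :: "('v, 'e, 'a) agraph \<Rightarrow> 'v \<Rightarrow> 'e list \<Rightarrow> 'v" where
  "walk_end G v0 es = (if es = [] then v0 else tgt G (last es))"

definition walk_vertices :: "('v, 'e, 'a) agraph \<Rightarrow> 'v \<Rightarrow> 'e list \<Rightarrow> 'v list" where
  "walk_vertices G v0 es = v0 # map (tgt G) es"

definition walk_label :: "('v, 'e, 'a) agraph \<Rightarrow> 'v \<Rightarrow> 'e list \<Rightarrow> 'a list" where
  "walk_label G v0 es =
     (if es = [] then vlab G v0
      else elab G (hd es) @
           concat (map (\<lambda>e. drop (length (vlab G (src G e))) (elab G e)) (tl es)))"

definition closed_walk :: "('v, 'e, 'a) agraph \<Rightarrow> 'v \<Rightarrow> 'e list \<Rightarrow> bool" where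
  "closed_walk G v0 es \<longleftrightarrow> is_walk G v0 es \<and> walk_end G v0 es = v0"

definition directed_cycle :: "('v, 'e, 'a) agraph \<Rightarrow> 'v \<Rightarrow> 'e list \<Rightarrow> bool" where
  "directed_cycle G v0 es \<longleftrightarrow>
     closed_walk G v0 es \<and> es \<noteq> [] \<and> distinct (map (tgt G) es)"

definition prefix_edge :: "('v, 'e, 'a) agraph \<Rightarrow> 'e \<Rightarrow> bool" where
  "prefix_edge G e \<longleftrightarrow> elab G e = vlab G (tgt G e)"

definition suffix_edge :: "('v, 'e, 'a) agraph \<Rightarrow> 'e \<Rightarrow> bool" where
  "suffix_edge G e \<longleftrightarrow> elab G e = vlab G (src G e)"

definition assembly_graph :: "('v, 'e, 'a::finite) agraph \<Rightarrow> bool" where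
  "assembly_graph G \<longleftrightarrow>
     abstract_assembly_graph G \<and>
     (\<forall>v\<in>verts G. \<exists>v0 es. directed_cycle G v0 es \<and> v \<in> set (walk_vertices G v0 es)) \<and>
     (\<forall>e\<in>arcs G. \<exists>v0 es. directed_cycle G v0 es \<and> e \<in> set es) \<and>
     (\<forall>e\<in>arcs G. \<not> (prefix_edge G e \<and> suffix_edge G e))"

definition proper_infix :: "'a list \<Rightarrow> 'a list \<Rightarrow> bool" where
  "proper_infix u w \<longleftrightarrow> (\<exists>a b. a \<noteq> [] \<and> b \<noteq> [] \<and> w = a @ u @ b)"

definition inner_subwalk ::
  "('v, 'e, 'a) agraph \<Rightarrow> 'v \<Rightarrow> 'e list \<Rightarrow> 'v \<Rightarrow> 'e list \<Rightarrow> bool" where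
  "inner_subwalk G p0 ps q0 qs \<longleftrightarrow>
     (\<exists>as bs. as \<noteq> [] \<and> bs \<noteq> [] \<and> qs = as @ ps @ bs \<and> tgt G (last as) = p0)"

definition non_redundant :: "('v, 'e, 'a::finite) agraph \<Rightarrow> bool" where
  "non_redundant G \<longleftrightarrow>
     assembly_graph G \<and>
     (\<forall>p0 ps q0 qs. is_walk G p0 ps \<and> is_walk G q0 qs \<and>
        proper_infix (walk_label G p0 ps) (walk_label G q0 qs) \<longrightarrow>
        inner_subwalk G p0 ps q0 qs)"

text \<open>Circuits: primitive closed walks with at least one edge (rotations are
  just different representatives).\<close>

definition primitive_list :: "'e list \<Rightarrow> bool" where
  "primitive_list es \<longleftrightarrow> (\<forall>k ys. es = concat (replicate k ys) \<longrightarrow> k = 1)"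

definition is_circuit :: "('v, 'e, 'a) agraph \<Rightarrow> 'v \<Rightarrow> 'e list \<Rightarrow> bool" where
  "is_circuit G v0 es \<longleftrightarrow> closed_walk G v0 es \<and> es \<noteq> [] \<and> primitive_list es"

text \<open>Writing the walk label as Label(v0) x, the circuit label is the cyclic
  string <x>; we represent it by the finite word x.\<close>

definition circuit_word :: "('v, 'e, 'a) agraph \<Rightarrow> 'v \<Rightarrow> 'e list \<Rightarrow> 'a list" where
  "circuit_word G v0 es = drop (length (vlab G v0)) (walk_label G v0 es)"

text \<open>Cyclic string <x>: position i (i in Z, represented on nat by periodicity)
  carries x ! (i mod |x|).\<close>

definition cyc_word :: "'a list \<Rightarrow> nat \<Rightarrow> 'a" where
  "cyc_word x i = x ! (i mod length x)"

definition cyc_period :: "'a list \<Rightarrow> nat" where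
  "cyc_period x = (LEAST d. d \<ge> 1 \<and> (\<forall>i. cyc_word x (i + d) = cyc_word x i))"

definition cyc_occurrences :: "'a list \<Rightarrow> 'a list \<Rightarrow> nat" where
  "cyc_occurrences t x =
     card {i. i < cyc_period x \<and> (\<forall>j < length t. cyc_word x (i + j) = t ! j)}"

definition vertex_occurrences :: "('v, 'e, 'a) agraph \<Rightarrow> 'v \<Rightarrow> 'e list \<Rightarrow> 'v \<Rightarrow> nat" where
  "vertex_occurrences G v0 es v = length (filter (\<lambda>e. tgt G e = v) es)"

end

theory Submission
  imports Defs "HOL-Library.Stream"
begin

(* Unroll the circuit into the walks stake k (cycle es). Their labels are Label(v0) followed by
  copies of the circuit word x, and the label of the k-th vertex starts at a position p_k that
  grows by |x| per period and strictly increases between vertices whose labels have equal length,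
  because no edge is both a prefix and a suffix edge. Non-redundancy gives the converse: an
  occurrence of a walk label strictly inside the label of another walk is the label of a subwalk
  at exactly that position. So (p_k - |Label(v0)|) mod |x| maps the occurrences of v in one
  period of the circuit bijectively onto the occurrences of Label(v) in <x>. Applied to the label
  of the circuit itself, the converse and primitivity show that |x| is the least period of <x>. *)

lemma walk_Cons:
  assumes "abstract_assembly_graph G"
  shows "is_walk G v (e # es) \<longleftrightarrow> e \<in> arcs G \<and> src G e = v \<and> is_walk G (tgt G e) es"
proof
  assume walk: "is_walk G v (e # es)"
  then have "tgt G (es ! i) = src G (es ! Suc i)" if "Suc i < length es" for i
    using that by (auto simp: is_walk_def dest: spec[of _ "Suc i"])
  moreover have "es \<noteq> [] \<Longrightarrow> src G (hd es) = tgt G e"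
    using walk by (cases es) (auto simp: is_walk_def dest: spec[of _ 0])
  ultimately show "e \<in> arcs G \<and> src G e = v \<and> is_walk G (tgt G e) es"
    using walk assms by (auto simp: is_walk_def abstract_assembly_graph_def)
next
  assume "e \<in> arcs G \<and> src G e = v \<and> is_walk G (tgt G e) es"
  then show "is_walk G v (e # es)"
    using assms by (auto simp: is_walk_def abstract_assembly_graph_def nth_Cons
        split: nat.split) (metis hd_conv_nth)
qed

lemma walk_end_append: "walk_end G v (as @ bs) = walk_end G (walk_end G v as) bs"
  by (simp add: walk_end_def)

lemma walk_append:
  assumes "abstract_assembly_graph G"
  shows "is_walk G v (as @ bs) \<longleftrightarrow> is_walk G v as \<and> is_walk G (walk_end G v as) bs"
proof (induction as arbitrary: v)
  case Nil
  then show ?case by (simp add: is_walk_def walk_end_def)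
next
  case (Cons a as)
  then show ?case by (simp add: walk_Cons[OF assms] walk_end_def)
qed

lemma walk_label_eq_concat:
  assumes "abstract_assembly_graph G" and "is_walk G v es"
  shows "walk_label G v es =
    vlab G v @ concat (map (\<lambda>e. drop (length (vlab G (src G e))) (elab G e)) es)"
proof (cases es)
  case (Cons e es')
  with assms have "prefix (vlab G v) (elab G e)"
    by (auto simp: walk_Cons abstract_assembly_graph_def)
  then have "elab G e = vlab G v @ drop (length (vlab G v)) (elab G e)"
    by (auto simp: prefix_def)
  with Cons assms show ?thesis
    by (simp add: walk_label_def walk_Cons)
qed (simp add: walk_label_def)

lemma walk_label_append_concat:
  assumes "abstract_assembly_graph G" and "is_walk G v (as @ bs)"
  shows "walk_label G v (as @ bs) =
    walk_label G v as @ concat (map (\<lambda>e. drop (length (vlab G (src G e))) (elab G e)) bs)"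
  using assms walk_label_eq_concat[OF assms] walk_label_eq_concat[OF assms(1), of v as]
  by (simp add: walk_append)

lemma suffix_vlab_walk_end:
  assumes "abstract_assembly_graph G" and "is_walk G v es"
  shows "suffix (vlab G (walk_end G v es)) (walk_label G v es)"
  using assms(2)
proof (induction es rule: rev_induct)
  case Nil
  then show ?case by (simp add: walk_end_def walk_label_def)
next
  case (snoc e es)
  then have walk: "is_walk G v es" and e: "e \<in> arcs G" "src G e = walk_end G v es"
    by (auto simp: walk_append[OF assms(1)] walk_Cons[OF assms(1)])
  obtain w where w: "walk_label G v es = w @ vlab G (src G e)"
    using snoc.IH[OF walk] e(2) by (auto simp: suffix_def)
  have "prefix (vlab G (src G e)) (elab G e)" "suffix (vlab G (tgt G e)) (elab G e)"
    using assms(1) e(1) by (auto simp: abstract_assembly_graph_def)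
  moreover have "walk_label G v (es @ [e]) =
      w @ vlab G (src G e) @ drop (length (vlab G (src G e))) (elab G e)"
    using walk_label_append_concat[OF assms(1) snoc.prems] w by simp
  ultimately show ?case
    by (auto simp: walk_end_def prefix_def suffix_def) (metis append.assoc)
qed

definition end_label_pos :: "('v, 'e, 'a) agraph \<Rightarrow> 'v \<Rightarrow> 'e list \<Rightarrow> nat" where
  "end_label_pos G v es = length (walk_label G v es) - length (vlab G (walk_end G v es))"

lemma walk_label_split_end:
  assumes "abstract_assembly_graph G" and "is_walk G v es"
  shows "walk_label G v es =
    take (end_label_pos G v es) (walk_label G v es) @ vlab G (walk_end G v es)"
  using suffix_vlab_walk_end[OF assms] by (auto simp: suffix_def end_label_pos_def)

lemma end_label_pos_le: "end_label_pos G v es \<le> length (walk_label G v es)"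
  by (simp add: end_label_pos_def)

lemma walk_label_append:
  assumes "abstract_assembly_graph G" and "is_walk G v (as @ bs)"
  shows "walk_label G v (as @ bs) =
    take (end_label_pos G v as) (walk_label G v as) @ walk_label G (walk_end G v as) bs"
proof -
  have "is_walk G v as" "is_walk G (walk_end G v as) bs"
    using assms by (simp_all add: walk_append)
  then show ?thesis
    using walk_label_append_concat[OF assms] walk_label_split_end[OF assms(1), of v as]
      walk_label_eq_concat[OF assms(1), of "walk_end G v as" bs]
    by (metis append.assoc)
qed

lemma length_walk_label_append:
  assumes "abstract_assembly_graph G" and "is_walk G v (as @ bs)"
  shows "length (walk_label G v (as @ bs)) =
    end_label_pos G v as + length (walk_label G (walk_end G v as) bs)"
  using walk_label_append[OF assms] end_label_pos_le[of G v as] by simp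

lemma end_label_pos_append:
  assumes "abstract_assembly_graph G" and "is_walk G v (as @ bs)"
  shows "end_label_pos G v (as @ bs) = end_label_pos G v as + end_label_pos G (walk_end G v as) bs"
proof -
  have "is_walk G (walk_end G v as) bs"
    using assms by (simp add: walk_append)
  then have "length (vlab G (walk_end G v (as @ bs))) \<le> length (walk_label G (walk_end G v as) bs)"
    using suffix_vlab_walk_end[OF assms(1)] suffix_length_le walk_end_append by metis
  then show ?thesis
    using length_walk_label_append[OF assms] by (simp add: end_label_pos_def walk_end_append)
qed

lemma walk_label_factor:
  assumes "abstract_assembly_graph G" and "is_walk G v (as @ bs @ cs)"
  defines "W \<equiv> walk_label G (walk_end G v as) bs"
  shows "take (length W) (drop (end_label_pos G v as) (walk_label G v (as @ bs @ cs))) = W"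
    and "end_label_pos G v as + length W \<le> length (walk_label G v (as @ bs @ cs))"
proof -
  have "is_walk G (walk_end G v as) (bs @ cs)"
    using assms(2) by (simp add: walk_append[OF assms(1)])
  then obtain C where "walk_label G (walk_end G v as) (bs @ cs) = W @ C"
    using walk_label_append_concat[OF assms(1)] W_def by blast
  then have "walk_label G v (as @ bs @ cs) = take (end_label_pos G v as) (walk_label G v as) @ W @ C"
    and "length (take (end_label_pos G v as) (walk_label G v as)) = end_label_pos G v as"
    using walk_label_append[OF assms(1,2)] end_label_pos_le[of G v as] by simp_all
  then show "take (length W) (drop (end_label_pos G v as) (walk_label G v (as @ bs @ cs))) = W"
    and "end_label_pos G v as + length W \<le> length (walk_label G v (as @ bs @ cs))"
    by simp_all
qed

lemma length_vlab_less_walk_label: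
  assumes G: "assembly_graph G" and walk: "is_walk G w bs" and "bs \<noteq> []"
    and pos0: "end_label_pos G w bs = 0"
  shows "length (vlab G w) < length (walk_label G w bs)"
proof (rule ccontr)
  assume short: "\<not> ?thesis"
  have aag: "abstract_assembly_graph G"
    using G by (simp add: assembly_graph_def)
  obtain e bs' where bs: "bs = e # bs'"
    using \<open>bs \<noteq> []\<close> by (cases bs) auto
  have e: "e \<in> arcs G" "src G e = w"
    using walk bs by (auto simp: walk_Cons[OF aag])
  then have pre: "prefix (vlab G w) (elab G e)" and suf: "suffix (vlab G (tgt G e)) (elab G e)"
    using aag by (auto simp: abstract_assembly_graph_def)
  have "drop (length (vlab G w)) (elab G e) = []"
    using short walk_label_eq_concat[OF aag walk] bs e(2) by simp
  with pre e(2) have "suffix_edge G e"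
    by (auto simp: suffix_edge_def prefix_def)
  with G e(1) have "elab G e \<noteq> vlab G (tgt G e)"
    by (auto simp: assembly_graph_def prefix_edge_def)
  with suf have "length (vlab G (tgt G e)) < length (elab G e)"
    by (auto simp: suffix_def)
  moreover have "length (walk_label G w [e]) = length (elab G e)"
    by (simp add: walk_label_def)
  ultimately have "0 < end_label_pos G w [e]"
    by (simp add: end_label_pos_def walk_end_def)
  moreover have "end_label_pos G w [e] \<le> end_label_pos G w bs"
    using end_label_pos_append[OF aag, of w "[e]" bs'] walk bs by simp
  ultimately show False
    using pos0 by simp
qed

lemma end_label_pos_less:
  assumes G: "assembly_graph G" and walk: "is_walk G v (as @ bs)" and "bs \<noteq> []"
    and same_length: "length (vlab G (walk_end G v (as @ bs))) = length (vlab G (walk_end G v as))"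
  shows "end_label_pos G v as < end_label_pos G v (as @ bs)"
proof -
  have aag: "abstract_assembly_graph G"
    using G by (simp add: assembly_graph_def)
  let ?w = "walk_end G v as"
  have walk_bs: "is_walk G ?w bs"
    using walk by (simp add: walk_append[OF aag])
  have "0 < end_label_pos G ?w bs"
  proof (rule ccontr)
    assume "\<not> 0 < end_label_pos G ?w bs"
    then have "end_label_pos G ?w bs = 0" by simp
    moreover from this have "length (walk_label G ?w bs) = length (vlab G ?w)"
      using arg_cong[OF walk_label_split_end[OF aag walk_bs], of length] same_length
      by (simp add: walk_end_append)
    ultimately show False
      using length_vlab_less_walk_label[OF G walk_bs \<open>bs \<noteq> []\<close>] by simp
  qed
  then show ?thesis
    using end_label_pos_append[OF aag walk] by simp
qed

lemma proper_infix_if_occurs_inside: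
  assumes W: "take (length W) (drop a T) = W" and u: "take (length u) (drop s T) = u"
    and "a < s" "s + length u < a + length W"
  shows "proper_infix u W"
proof -
  have "take (length u) (drop (s - a) W) =
      take (length u) (take (length W - (s - a)) (drop (s - a) (drop a T)))"
    by (subst W[symmetric]) (simp add: drop_take)
  also have "\<dots> = take (length u) (drop s T)"
    using assms(3,4) by (simp add: min_def)
  finally have "take (length u) (drop (s - a) W) = u"
    using u by simp
  then have "W = take (s - a) W @ u @ drop (s - a + length u) W"
    by (metis append_take_drop_id drop_drop add.commute)
  moreover have "take (s - a) W \<noteq> []" "drop (s - a + length u) W \<noteq> []"
    using assms by auto
  ultimately show ?thesis
    unfolding proper_infix_def by blast
qed

lemma subwalk_in_window:
  assumes nr: "non_redundant G" and wq: "is_walk G q0 qs" and wp: "is_walk G p0 ps"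
    and occ: "take (length (walk_label G p0 ps)) (drop s (walk_label G q0 qs)) = walk_label G p0 ps"
    and ij: "i \<le> j" "j \<le> length qs"
    and left: "end_label_pos G q0 (take i qs) < s"
    and right: "s + length (walk_label G p0 ps) < length (walk_label G q0 (take j qs))"
  obtains as bs where "qs = as @ ps @ bs" "walk_end G q0 as = p0"
    "i < length as" "length (as @ ps) < j"
proof -
  have aag: "abstract_assembly_graph G"
    using nr by (simp add: non_redundant_def assembly_graph_def)
  define D where "D = drop i (take j qs)"
  define w where "w = walk_end G q0 (take i qs)"
  have take_j: "take j qs = take i qs @ D"
    using ij by (simp add: D_def min_def) (metis append_take_drop_id min.absorb1 take_take)
  have split: "qs = take i qs @ D @ drop j qs"
    using take_j by (metis append.assoc append_take_drop_id)
  have wD: "is_walk G w D"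
    using wq split walk_append[OF aag, of q0 "take i qs" "D @ drop j qs"]
    by (simp add: w_def walk_append[OF aag])
  have "take (length (walk_label G w D))
      (drop (end_label_pos G q0 (take i qs)) (walk_label G q0 qs)) = walk_label G w D"
    using walk_label_factor[OF aag, of q0 "take i qs" D "drop j qs"] wq split by (simp add: w_def)
  moreover have "end_label_pos G q0 (take i qs) + length (walk_label G w D) =
      length (walk_label G q0 (take j qs))"
    using length_walk_label_append[OF aag, of q0 "take i qs" D] take_j wq walk_append[OF aag]
    by (metis append_take_drop_id w_def)
  ultimately have "proper_infix (walk_label G p0 ps) (walk_label G w D)"
    using proper_infix_if_occurs_inside[OF _ occ] left right by simp
  then obtain as' bs'
    where as': "as' \<noteq> []" "bs' \<noteq> []" "D = as' @ ps @ bs'" "tgt G (last as') = p0"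
    using nr wD wp unfolding non_redundant_def inner_subwalk_def by blast
  show thesis
  proof
    show "qs = (take i qs @ as') @ ps @ bs' @ drop j qs"
      using split as'(3) by simp
    show "walk_end G q0 (take i qs @ as') = p0"
      using as'(1,4) by (simp add: walk_end_append walk_end_def)
    show "i < length (take i qs @ as')" "length ((take i qs @ as') @ ps) < j"
      using as' ij arg_cong[OF take_j, of length] by auto
  qed
qed

lemma subwalk_at_label_occurrence:
  assumes nr: "non_redundant G" and wq: "is_walk G q0 qs" and wp: "is_walk G p0 ps"
    and occ: "take (length (walk_label G p0 ps)) (drop s (walk_label G q0 qs)) = walk_label G p0 ps"
    and inner: "0 < s" "s + length (walk_label G p0 ps) < length (walk_label G q0 qs)"
  obtains as bs where "qs = as @ ps @ bs" "walk_end G q0 as = p0" "end_label_pos G q0 as = s"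
proof -
  have aag: "abstract_assembly_graph G"
    using nr by (simp add: non_redundant_def assembly_graph_def)
  let ?l = "walk_label G p0 ps"
  let ?pos = "\<lambda>k. end_label_pos G q0 (take k qs)"
  let ?len = "\<lambda>k. length (walk_label G q0 (take k qs))"
  (* With this extremal choice of the window, the subwalk that non-redundancy finds inside it
    can neither start before nor end after the given occurrence. *)
  define i where "i = (GREATEST k. k \<le> length qs \<and> ?pos k < s)"
  have i: "i \<le> length qs" "?pos i < s"
    using GreatestI_nat[of "\<lambda>k. k \<le> length qs \<and> ?pos k < s" 0 "length qs"] inner(1)
    by (simp_all add: i_def end_label_pos_def walk_end_def walk_label_def)
  have i_max: "k \<le> i" if "k \<le> length qs" "?pos k < s" for k
    using Greatest_le_nat[of "\<lambda>k. k \<le> length qs \<and> ?pos k < s" k "length qs"] that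
    by (simp add: i_def)
  define j where "j = (LEAST k. i \<le> k \<and> k \<le> length qs \<and> s + length ?l < ?len k)"
  have j: "i \<le> j" "j \<le> length qs" "s + length ?l < ?len j"
    using LeastI[of "\<lambda>k. i \<le> k \<and> k \<le> length qs \<and> s + length ?l < ?len k" "length qs"] i inner(2)
    by (simp_all add: j_def)
  have j_min: "j \<le> k" if "i \<le> k" "k \<le> length qs" "s + length ?l < ?len k" for k
    using Least_le[of "\<lambda>k. i \<le> k \<and> k \<le> length qs \<and> s + length ?l < ?len k" k] that
    by (simp add: j_def)
  obtain as bs where qs: "qs = as @ ps @ bs" and end_as: "walk_end G q0 as = p0"
    and bounds: "i < length as" "length (as @ ps) < j"
    using subwalk_in_window[OF nr wq wp occ j(1,2) i(2) j(3)] by blast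
  have "\<not> ?pos (length as) < s"
    using i_max[of "length as"] bounds j(2) qs by auto
  then have "s \<le> end_label_pos G q0 as"
    using qs by simp
  moreover have "\<not> s + length ?l < ?len (length (as @ ps))"
    using j_min[of "length (as @ ps)"] bounds j(2) by auto
  then have "end_label_pos G q0 as \<le> s"
    using length_walk_label_append[OF aag, of q0 as ps] wq qs end_as walk_append[OF aag]
    by (metis add_le_cancel_right append.assoc append_take_drop_id not_le
        append_eq_conv_conj)
  ultimately show thesis
    using that qs end_as by simp
qed

lemma snth_cycle: "u \<noteq> [] \<Longrightarrow> cycle u !! i = u ! (i mod length u)"
  by (metis sdrop_simps(1) sdrop_cycle cycle.sel(1) hd_rotate_conv_nth mod_mod_trivial)

lemma stake_cycle_add:
  "u \<noteq> [] \<Longrightarrow> stake (q * length u + k) (cycle u) = concat (replicate q u) @ stake k (cycle u)"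
  using stake_add[of "q * length u" "cycle u" k] by simp

lemma primitive_list_rotate_dvd:
  assumes prim: "primitive_list xs" and rot: "rotate k xs = xs"
  shows "length xs dvd k"
proof (rule ccontr)
  assume not_dvd: "\<not> length xs dvd k"
  define m where "m = k mod length xs"
  have "xs \<noteq> []"
    using prim by (auto simp: primitive_list_def dest: spec[of _ 0])
  then have m: "0 < m" "m < length xs"
    using not_dvd by (auto simp: m_def dvd_eq_mod_eq_0)
  have "drop m xs @ take m xs = take m xs @ drop m xs"
    using rot by (simp add: rotate_drop_take m_def)
  then obtain c zs where "1 < c" "concat (replicate c zs) = take m xs @ drop m xs"
    using comm_append_is_replicate[of "take m xs" "drop m xs"] m by fastforce
  then show False
    using prim by (auto simp: primitive_list_def)
qed

lemma stake_eq_iff: "stake (length u) s = u \<longleftrightarrow> (\<forall>j < length u. s !! j = u ! j)"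
  by (simp add: list_eq_iff_nth_eq)

locale closed_walk_unrolling =
  fixes G :: "('v, 'e, 'a::finite) agraph" and v0 :: 'v and es :: "'e list"
  assumes assembly: "assembly_graph G" and closed: "closed_walk G v0 es" and nonempty: "es \<noteq> []"
begin

abbreviation word where "word \<equiv> circuit_word G v0 es"
abbreviation L where "L \<equiv> length word"
abbreviation r where "r \<equiv> length (vlab G v0)"

definition label_pos :: "nat \<Rightarrow> nat" where
  "label_pos k = end_label_pos G v0 (stake k (cycle es))"

definition vertex :: "nat \<Rightarrow> 'v" where
  "vertex k = walk_end G v0 (stake k (cycle es))"

lemma abstract: "abstract_assembly_graph G"
  using assembly by (simp add: assembly_graph_def)

lemma walk_es: "is_walk G v0 es" and walk_end_es: "walk_end G v0 es = v0"
  using closed by (simp_all add: closed_walk_def)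

lemma walk_replicate:
  "is_walk G v0 (concat (replicate q es)) \<and> walk_end G v0 (concat (replicate q es)) = v0"
proof (induction q)
  case 0
  show ?case
    using walk_es by (simp add: is_walk_def walk_end_def)
next
  case (Suc q)
  then show ?case
    using walk_es walk_end_es by (simp add: walk_append[OF abstract] walk_end_append)
qed

lemma walk_stake: "is_walk G v0 (stake k (cycle es))"
proof -
  have "k \<le> k * length es"
    using nonempty by (cases es) auto
  then have "stake k (cycle es) = take k (concat (replicate k es))"
    using take_stake[of k "k * length es" "cycle es"] nonempty by (simp add: min_absorb1)
  then show ?thesis
    using walk_replicate[of k] walk_append[OF abstract, of v0 _ "drop k (concat (replicate k es))"]
    by (metis append_take_drop_id)
qed

lemma walk_label_replicate:
  "walk_label G v0 (concat (replicate q es)) = vlab G v0 @ concat (replicate q word)"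
proof -
  have "word = concat (map (\<lambda>e. drop (length (vlab G (src G e))) (elab G e)) es)"
    using walk_label_eq_concat[OF abstract walk_es] by (simp add: circuit_word_def)
  moreover have "concat (map f (concat (replicate q es))) = concat (replicate q (concat (map f es)))"
    for f :: "'e \<Rightarrow> 'a list"
    by (induction q) auto
  ultimately show ?thesis
    using walk_label_eq_concat[OF abstract conjunct1[OF walk_replicate[of q]]] by simp
qed

lemma end_label_pos_replicate: "end_label_pos G v0 (concat (replicate q es)) = q * L"
  using walk_replicate[of q] by (simp add: end_label_pos_def walk_label_replicate length_concat
      sum_list_replicate)

lemma label_pos_add: "label_pos (q * length es + k) = q * L + label_pos k"
  and vertex_add: "vertex (q * length es + k) = vertex k"
  using end_label_pos_append[OF abstract, of v0 "concat (replicate q es)" "stake k (cycle es)"]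
    walk_stake[of "q * length es + k"] walk_replicate[of q]
  by (simp_all add: label_pos_def vertex_def stake_cycle_add nonempty end_label_pos_replicate
      walk_end_append)

lemma vertex_Suc: "vertex (Suc k) = tgt G (es ! (k mod length es))"
  by (simp add: vertex_def stake_Suc walk_end_append walk_end_def snth_cycle nonempty
      del: stake.simps(2))

lemma label_pos_less:
  assumes "c1 < c2" and "length (vlab G (vertex c2)) = length (vlab G (vertex c1))"
  shows "label_pos c1 < label_pos c2"
proof -
  let ?bs = "stake (c2 - c1) (sdrop c1 (cycle es))"
  have "stake c2 (cycle es) = stake c1 (cycle es) @ ?bs"
    using stake_add[of c1 "cycle es" "c2 - c1"] assms(1) by simp
  moreover have "?bs \<noteq> []"
    using assms(1) by simp
  ultimately show ?thesis
    using end_label_pos_less[OF assembly, of v0 "stake c1 (cycle es)" ?bs] walk_stake[of c2] assms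
    by (simp add: label_pos_def vertex_def)
qed

lemma L_pos: "0 < L"
  using label_pos_less[of 0 "length es"] label_pos_add[of 1 0] vertex_add[of 1 0] nonempty by simp

lemma walk_label_stake:
  "walk_label G v0 (stake (q * length es) (cycle es)) = vlab G v0 @ stake (q * L) (cycle word)"
  using L_pos nonempty by (simp add: walk_label_replicate)

lemma occurs_in_unrolling_iff:
  assumes "r \<le> s" and "s + length u \<le> r + q * L"
  shows "take (length u) (drop s (walk_label G v0 (stake (q * length es) (cycle es)))) = u \<longleftrightarrow>
    (\<forall>j < length u. cycle word !! (s - r + j) = u ! j)"
proof -
  have "drop s (walk_label G v0 (stake (q * length es) (cycle es))) =
      stake (q * L - (s - r)) (sdrop (s - r) (cycle word))"
    using assms(1) by (simp add: walk_label_stake drop_stake)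
  then have "take (length u) (drop s (walk_label G v0 (stake (q * length es) (cycle es)))) =
      stake (length u) (sdrop (s - r) (cycle word))"
    using assms take_stake[of "length u" "q * L - (s - r)"] by (simp add: min_absorb1)
  then show ?thesis
    by (simp add: stake_eq_iff sdrop_snth)
qed

(* Position p \<ge> r of the unrolled label is position p - r of the cyclic word; adding r * L
  keeps the truncated subtraction exact. *)
definition cyc_label_pos :: "nat \<Rightarrow> nat" where
  "cyc_label_pos c = (label_pos c + r * L - r) mod L"

lemma r_le_mult_L: "r \<le> r * L"
  using L_pos by (simp add: Suc_leI)

lemma snth_cycle_word_mod: "cycle word !! (a mod L + j) = cycle word !! (a + j)"
  using L_pos by (simp add: snth_cycle mod_add_left_eq)

lemma vertex_label_at_cyc_label_pos:
  assumes "j < length (vlab G (vertex c))"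
  shows "cycle word !! (cyc_label_pos c + j) = vlab G (vertex c) ! j"
proof -
  \<comment> \<open>r periods later the same vertex label starts at a position of at least r\<close>
  define c' where "c' = r * length es + c"
  define u where "u = vlab G (vertex c')"
  have label_pos_c': "label_pos c' = r * L + label_pos c" and u: "u = vlab G (vertex c)"
    by (simp_all add: c'_def u_def label_pos_add vertex_add)
  have "c' \<le> c' * length es"
    using nonempty by (cases es) auto
  then have split: "stake c' (cycle es) @ [] @ stake (c' * length es - c') (sdrop c' (cycle es)) =
      stake (c' * length es) (cycle es)"
    using stake_add[of c' "cycle es"] by simp
  have "walk_label G (vertex c') [] = u"
    by (simp add: walk_label_def u_def)
  then have "take (length u) (drop (label_pos c') (walk_label G v0 (stake (c' * length es) (cycle es))))
      = u"
    and "label_pos c' + length u \<le> length (walk_label G v0 (stake (c' * length es) (cycle es)))"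
    using walk_label_factor[OF abstract, of v0 "stake c' (cycle es)" "[]"
        "stake (c' * length es - c') (sdrop c' (cycle es))", unfolded split]
      walk_stake[of "c' * length es"]
    by (simp_all add: label_pos_def vertex_def)
  moreover have "r \<le> label_pos c'"
    using label_pos_c' r_le_mult_L by linarith
  ultimately have "\<forall>j < length u. cycle word !! (label_pos c' - r + j) = u ! j"
    using occurs_in_unrolling_iff[of "label_pos c'" u c'] by (simp add: walk_label_stake)
  then have "cycle word !! (label_pos c' - r + j) = vlab G (vertex c) ! j"
    using assms u by simp
  moreover have "label_pos c' - r + j = (label_pos c + r * L - r) + j"
    using label_pos_c' r_le_mult_L by linarith
  ultimately show ?thesis
    using snth_cycle_word_mod[of "label_pos c + r * L - r" j] by (simp add: cyc_label_pos_def)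
qed

lemma cyc_label_pos_add: "cyc_label_pos (q * length es + c) = cyc_label_pos c"
proof -
  have "label_pos (q * length es + c) + r * L - r = (label_pos c + r * L - r) + q * L"
    using label_pos_add[of q c] r_le_mult_L by linarith
  then show ?thesis
    by (simp add: cyc_label_pos_def)
qed

lemma cyc_label_pos_inj:
  assumes "c1 < c2" and "c2 < c1 + length es"
    and same_length: "length (vlab G (vertex c2)) = length (vlab G (vertex c1))"
  shows "cyc_label_pos c1 \<noteq> cyc_label_pos c2"
proof
  assume eq: "cyc_label_pos c1 = cyc_label_pos c2"
  have "label_pos c1 < label_pos c2"
    using label_pos_less assms by simp
  moreover have "label_pos c2 < label_pos (c1 + length es)"
    using label_pos_less[of c2 "c1 + length es"] assms vertex_add[of 1 c1] by (simp add: add.commute)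
  then have "label_pos c2 < label_pos c1 + L"
    using label_pos_add[of 1 c1] by (simp add: add.commute)
  ultimately have "0 < (label_pos c2 + r * L - r) - (label_pos c1 + r * L - r)"
    and "(label_pos c2 + r * L - r) - (label_pos c1 + r * L - r) < L"
    using r_le_mult_L by linarith+
  moreover have "L dvd (label_pos c2 + r * L - r) - (label_pos c1 + r * L - r)"
    using eq \<open>label_pos c1 < label_pos c2\<close>
      mod_eq_dvd_iff_nat[of "label_pos c1 + r * L - r" "label_pos c2 + r * L - r" L]
    by (simp add: cyc_label_pos_def)
  ultimately show False
    by (auto dest: dvd_imp_le)
qed

lemma reduce_to_first_period:
  obtains k
  where "k < length es" "vertex (Suc k) = vertex c" "cyc_label_pos (Suc k) = cyc_label_pos c"
proof
  define k where "k = (c + length es - 1) mod length es"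
  define q where "q = (c + length es - 1) div length es"
  have c: "q * length es + Suc k = 1 * length es + c"
    using div_mult_mod_eq[of "c + length es - 1" "length es"] nonempty
    by (simp add: k_def q_def)
  show "k < length es"
    using nonempty by (simp add: k_def)
  show "vertex (Suc k) = vertex c"
    using vertex_add[of q "Suc k"] vertex_add[of 1 c] c by simp
  show "cyc_label_pos (Suc k) = cyc_label_pos c"
    using cyc_label_pos_add[of q "Suc k"] cyc_label_pos_add[of 1 c] c by simp
qed

end

locale non_redundant_circuit = closed_walk_unrolling +
  assumes non_redundant: "non_redundant G" and primitive: "primitive_list es"
begin

lemma subwalk_of_unrolling:
  assumes wp: "is_walk G p0 ps"
    and occ: "take (length (walk_label G p0 ps)) (drop s (walk_label G v0 (stake N (cycle es)))) =
      walk_label G p0 ps"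
    and inner: "0 < s" "s + length (walk_label G p0 ps) < length (walk_label G v0 (stake N (cycle es)))"
  obtains c where "vertex c = p0" "label_pos c = s" "stake (length ps) (sdrop c (cycle es)) = ps"
proof -
  obtain as bs where split: "stake N (cycle es) = as @ ps @ bs"
    and as: "walk_end G v0 as = p0" "end_label_pos G v0 as = s"
    using subwalk_at_label_occurrence[OF non_redundant walk_stake wp occ inner] by blast
  define c where "c = length as"
  have "c + length ps \<le> N"
    using arg_cong[OF split, of length] by (simp add: c_def)
  moreover have "stake N (cycle es) = stake c (cycle es) @ stake (N - c) (sdrop c (cycle es))"
    using stake_add[of c "cycle es" "N - c"] calculation by simp
  ultimately have "as @ (ps @ bs) = stake c (cycle es) @ stake (N - c) (sdrop c (cycle es))"
    using split by simp
  then have "as = stake c (cycle es)" "stake (N - c) (sdrop c (cycle es)) = ps @ bs"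
    using append_eq_append_conv[of as "stake c (cycle es)" "ps @ bs"]
    by (simp_all add: c_def del: stake_add)
  moreover have "length ps \<le> N - c"
    using \<open>c + length ps \<le> N\<close> by simp
  ultimately have "vertex c = p0" "label_pos c = s" "stake (length ps) (sdrop c (cycle es)) = ps"
    using as take_stake[of "length ps" "N - c" "sdrop c (cycle es)"]
    by (simp_all add: vertex_def label_pos_def min_absorb1)
  then show thesis
    using that by blast
qed

lemma L_dvd_label_pos_at_circuit:
  assumes "stake (length es) (sdrop c (cycle es)) = es"
  shows "L dvd label_pos c"
proof -
  have "rotate c es = es"
    using assms nonempty by (simp add: sdrop_cycle rotate_conv_mod[symmetric])
  then obtain q where "c = q * length es"
    using primitive_list_rotate_dvd[OF primitive] by (metis dvdE mult.commute)
  then show ?thesis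
    using label_pos_add[of q 0] by (simp add: label_pos_def end_label_pos_def walk_label_def walk_end_def)
qed

lemma cyc_period_word: "cyc_period word = L"
proof (rule ccontr)
  assume "cyc_period word \<noteq> L"
  define d where "d = cyc_period word"
  let ?periodic = "\<lambda>d. 1 \<le> d \<and> (\<forall>i. cyc_word word (i + d) = cyc_word word i)"
  have "?periodic L"
    using L_pos by (simp add: cyc_word_def Suc_leI)
  then have "?periodic d" "d \<le> L"
    using LeastI[of ?periodic L] Least_le[of ?periodic L] by (simp_all add: d_def cyc_period_def)
  with \<open>cyc_period word \<noteq> L\<close> have d: "1 \<le> d" "d < L"
    by (simp_all add: d_def)
  have period_d: "cycle word !! (i + d) = cycle word !! i" for i
    using \<open>?periodic d\<close> L_pos by (simp add: cyc_word_def snth_cycle)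
  define l where "l = walk_label G v0 es"
  define T where "T = walk_label G v0 (stake ((r + 2) * length es) (cycle es))"
  have len_l: "length l = r + L"
    using walk_label_replicate[of 1] by (simp add: l_def)
  have len_T: "length T = r + (r + 2) * L"
    unfolding T_def walk_label_stake by simp
  have unrolled: "stake ((r + 2) * length es) (cycle es) = concat (replicate r es) @ es @ es"
    using stake_cycle_add[OF nonempty, of r "2 * length es"] nonempty
    by (simp add: add_mult_distrib numeral_2_eq_2)
  have walk: "is_walk G v0 (concat (replicate r es) @ es @ es)"
    using walk_stake[of "(r + 2) * length es"] unfolding unrolled .
  have "take (length l) (drop (r * L) T) = l"
    unfolding T_def unrolled using walk_label_factor(1)[OF abstract walk] walk_replicate[of r]
    by (simp add: l_def end_label_pos_replicate)
  then have "\<forall>j < length l. cycle word !! (r * L - r + j) = l ! j"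
    using occurs_in_unrolling_iff[of "r * L" l "r + 2"] r_le_mult_L len_l by (simp add: T_def)
  moreover have "r * L + d - r + j = (r * L - r + j) + d" for j
    using r_le_mult_L by linarith
  ultimately have "\<forall>j < length l. cycle word !! (r * L + d - r + j) = l ! j"
    using period_d by (metis (no_types))
  then have "take (length l) (drop (r * L + d) T) = l"
    using occurs_in_unrolling_iff[of "r * L + d" l "r + 2"] r_le_mult_L len_l d by (simp add: T_def)
  then obtain c where c: "label_pos c = r * L + d" "stake (length es) (sdrop c (cycle es)) = es"
    using subwalk_of_unrolling[OF walk_es, of "r * L + d" "(r + 2) * length es", folded T_def l_def]
      d len_l len_T by auto
  then have "L dvd r * L + d"
    using L_dvd_label_pos_at_circuit[OF c(2)] by simp
  then have "L dvd d"
    by (simp add: dvd_add_right_iff)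
  then show False
    using d by (auto dest: dvd_imp_le)
qed

lemma cyc_label_pos_at_cyclic_occurrence:
  assumes v: "v \<in> verts G" and i: "i < L"
    and occ: "\<forall>j < length (vlab G v). cycle word !! (i + j) = vlab G v ! j"
  obtains c where "vertex c = v" "cyc_label_pos c = i"
proof -
  define u where "u = vlab G v"
  define q where "q = length u + 2"
  define T where "T = walk_label G v0 (stake (q * length es) (cycle es))"
  have len_T: "length T = r + q * L"
    unfolding T_def walk_label_stake by simp
  have "length u \<le> length u * L"
    using L_pos by (simp add: Suc_leI)
  moreover have "q * L = length u * L + 2 * L"
    by (simp add: q_def algebra_simps)
  ultimately have bound: "r + L + i + length u < r + q * L"
    using i by linarith
  have "cycle word !! (L + a) = cycle word !! a" for a
    using L_pos by (simp add: snth_cycle)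
  then have "\<forall>j < length u. cycle word !! (r + L + i - r + j) = u ! j"
    using occ by (simp add: u_def add.assoc)
  then have "take (length u) (drop (r + L + i) T) = u"
    using occurs_in_unrolling_iff[of "r + L + i" u q] bound by (simp add: T_def)
  moreover have "is_walk G v []" and "walk_label G v [] = u"
    using v by (simp_all add: is_walk_def walk_label_def u_def)
  ultimately obtain c where c: "vertex c = v" "label_pos c = r + L + i"
    using subwalk_of_unrolling[of v "[]" "r + L + i" "q * length es", folded T_def]
      L_pos bound len_T by auto
  moreover have "label_pos c + r * L - r = i + L * (r + 1)"
    using c(2) by (simp add: algebra_simps)
  then have "cyc_label_pos c = i"
    unfolding cyc_label_pos_def using i by (simp only: mod_mult_self2 mod_less)
  ultimately show thesis
    using that by blast
qed

lemma vertex_occurrences_eq_cyc_occurrences: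
  assumes v: "v \<in> verts G"
  shows "vertex_occurrences G v0 es v = cyc_occurrences (vlab G v) word"
proof -
  define Vis where "Vis = {k. k < length es \<and> vertex (Suc k) = v}"
  define Occ where
    "Occ = {i. i < L \<and> (\<forall>j < length (vlab G v). cycle word !! (i + j) = vlab G v ! j)}"
  have "inj_on (\<lambda>k. cyc_label_pos (Suc k)) Vis"
  proof (rule inj_onI)
    have less: "cyc_label_pos (Suc k1) \<noteq> cyc_label_pos (Suc k2)"
      if "k1 \<in> Vis" "k2 \<in> Vis" "k1 < k2" for k1 k2
      using that by (intro cyc_label_pos_inj) (auto simp: Vis_def)
    fix k1 k2
    assume "k1 \<in> Vis" "k2 \<in> Vis" "cyc_label_pos (Suc k1) = cyc_label_pos (Suc k2)"
    then show "k1 = k2"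
      using less[of k1 k2] less[of k2 k1] by (cases k1 k2 rule: linorder_cases) auto
  qed
  moreover have "(\<lambda>k. cyc_label_pos (Suc k)) ` Vis \<subseteq> Occ"
  proof
    fix i
    assume "i \<in> (\<lambda>k. cyc_label_pos (Suc k)) ` Vis"
    then obtain k where "vertex (Suc k) = v" "i = cyc_label_pos (Suc k)"
      by (auto simp: Vis_def)
    then show "i \<in> Occ"
      using L_pos vertex_label_at_cyc_label_pos[of _ "Suc k"]
      by (simp add: Occ_def cyc_label_pos_def)
  qed
  moreover have "Occ \<subseteq> (\<lambda>k. cyc_label_pos (Suc k)) ` Vis"
  proof
    fix i
    assume "i \<in> Occ"
    then obtain c where "vertex c = v" "cyc_label_pos c = i"
      using cyc_label_pos_at_cyclic_occurrence[OF v] by (auto simp: Occ_def)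
    moreover obtain k where "k < length es" "vertex (Suc k) = vertex c"
      and "cyc_label_pos (Suc k) = cyc_label_pos c"
      by (rule reduce_to_first_period)
    ultimately show "i \<in> (\<lambda>k. cyc_label_pos (Suc k)) ` Vis"
      by (intro image_eqI[of _ _ k]) (simp_all add: Vis_def)
  qed
  ultimately have "card Vis = card Occ"
    by (intro bij_betw_same_card bij_betw_imageI) auto
  moreover have "vertex_occurrences G v0 es v = card Vis"
    by (simp add: vertex_occurrences_def length_filter_conv_card Vis_def vertex_Suc
        cong: conj_cong)
  moreover have "cyc_occurrences (vlab G v) word = card Occ"
    using L_pos by (simp add: cyc_occurrences_def cyc_period_word Occ_def cyc_word_def snth_cycle)
  ultimately show ?thesis
    by simp
qed

end

theorem theorem1:
  fixes G :: "('v, 'e, 'a::finite) agraph"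
  assumes "non_redundant G"
    and "is_circuit G v0 es"
    and "v \<in> verts G"
  shows "vertex_occurrences G v0 es v = cyc_occurrences (vlab G v) (circuit_word G v0 es)"
proof -
  have "assembly_graph G"
    using assms(1) by (simp add: non_redundant_def)
  then interpret non_redundant_circuit G v0 es
    using assms(1,2) by unfold_locales (simp_all add: is_circuit_def closed_walk_def)
  show ?thesis
    using vertex_occurrences_eq_cyc_occurrences[OF assms(3)] .
qed

end
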